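(* Let $x_1,\dots,x_n$ be independent random variables taking values in $[0,1]$ with $\mathbb{E}[x_i]\le\nu$ for all $i$, for some $\nu\in[0,1]$. For any $c\ge1$ and any $\lambda\in\big[0,\frac{\ln c}{4n-3}\big]$, $$\mathbb{E}\exp\big(\lambda(x_1+\dots+x_n)^2\big)\le\exp\big(\lambda cn\nu(1+cn\nu)\big).$$ *)

theory Defs
  imports "HOL-Probability.Probability"
begin

end

theory Submission
  imports Defs
begin

text \<open>
  Let \<open>S = x\<^sub>1 + \<dots> + x\<^sub>n\<close> and \<open>\<Phi> = E exp (\<lambda> S\<^sup>2)\<close>. Gibbs' inequality
  \<open>ln (E e\<^sup>f) E e\<^sup>f \<le> E (f e\<^sup>f)\<close>, applied to \<open>f = \<lambda> S\<^sup>2\<close>, reduces the claim to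
  \<open>E (S\<^sup>2 exp (\<lambda> S\<^sup>2)) \<le> c (n \<nu> + n\<^sup>2 \<nu>\<^sup>2) \<Phi>\<close>. Expand \<open>S\<^sup>2 = \<Sum>\<^sub>i\<^sub>j x\<^sub>i x\<^sub>j\<close>. Deleting
  \<open>x\<^sub>i\<close> and \<open>x\<^sub>j\<close> from \<open>S\<close> lowers \<open>\<lambda> S\<^sup>2\<close> by at most \<open>\<lambda> (4n - 3) \<le> ln c\<close>, so it costs only a
  factor \<open>c\<close>; after that, independence splits the term into
  \<open>E x\<^sub>i E x\<^sub>j E exp (\<lambda> S'\<^sup>2) \<le> \<nu>\<^sup>2 \<Phi>\<close> for \<open>i \<noteq> j\<close>, with \<open>S'\<close> the remaining sum, and into at most \<open>\<nu> \<Phi>\<close> on the diagonal, where \<open>x\<^sub>i\<^sup>2 \<le> x\<^sub>i\<close>.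
\<close>

lemma exp_mult_square_add_le:
  fixes t a m d lam c :: real
  assumes "0 \<le> t" "t \<le> m" "0 \<le> a" "a \<le> d" "0 \<le> lam"
    and "lam * (d * (2 * m + d)) \<le> ln c" "0 < c"
  shows "exp (lam * (t + a)\<^sup>2) \<le> c * exp (lam * t\<^sup>2)"
proof -
  have "(t + a)\<^sup>2 = t\<^sup>2 + a * (2 * t + a)" by (simp add: power2_eq_square algebra_simps)
  also have "a * (2 * t + a) \<le> d * (2 * m + d)" using assms by (intro mult_mono) auto
  finally have "lam * (t + a)\<^sup>2 \<le> lam * (t\<^sup>2 + d * (2 * m + d))"
    using assms(5) by (intro mult_left_mono) auto
  also have "\<dots> \<le> lam * t\<^sup>2 + ln c" using assms(6) by (simp add: algebra_simps)
  finally have "exp (lam * (t + a)\<^sup>2) \<le> exp (lam * t\<^sup>2 + ln c)" by simp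
  also have "\<dots> = c * exp (lam * t\<^sup>2)" using assms(7) by (simp add: exp_add)
  finally show ?thesis .
qed

lemma (in prob_space) ln_expectation_exp_mult_le:
  fixes f :: "'a \<Rightarrow> real"
  assumes int_exp: "integrable M (\<lambda>\<omega>. exp (f \<omega>))"
    and int_mult: "integrable M (\<lambda>\<omega>. f \<omega> * exp (f \<omega>))"
  shows "ln (expectation (\<lambda>\<omega>. exp (f \<omega>))) * expectation (\<lambda>\<omega>. exp (f \<omega>))
           \<le> expectation (\<lambda>\<omega>. f \<omega> * exp (f \<omega>))"
proof -
  define \<Phi> where "\<Phi> = expectation (\<lambda>\<omega>. exp (f \<omega>))"
  have "\<Phi> \<noteq> 0"
    using integral_nonneg_eq_0_iff_AE[OF int_exp] AE_False by (simp add: \<Phi>_def)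
  moreover have "0 \<le> \<Phi>" unfolding \<Phi>_def by (simp add: integral_nonneg_AE)
  ultimately have "0 < \<Phi>" by simp
  have pointwise: "exp (f \<omega>) + ln \<Phi> * exp (f \<omega>) - f \<omega> * exp (f \<omega>) \<le> \<Phi>" for \<omega>
  proof -
    have "exp (f \<omega>) * (1 + (ln \<Phi> - f \<omega>)) \<le> exp (f \<omega>) * exp (ln \<Phi> - f \<omega>)"
      by (intro mult_left_mono exp_ge_add_one_self) auto
    also have "\<dots> = \<Phi>" using \<open>0 < \<Phi>\<close> by (simp add: exp_diff)
    finally show ?thesis by (simp add: algebra_simps)
  qed
  have "expectation (\<lambda>\<omega>. exp (f \<omega>) + ln \<Phi> * exp (f \<omega>) - f \<omega> * exp (f \<omega>)) \<le> \<Phi>"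
    by (rule integral_le_const) (use int_exp int_mult pointwise in auto)
  then show ?thesis using int_exp int_mult by (simp add: \<Phi>_def)
qed

lemma (in prob_space) indep_vars_integral_mult_restrict:
  fixes X :: "'i \<Rightarrow> 'a \<Rightarrow> real" and G :: "('i \<Rightarrow> real) \<Rightarrow> real"
  assumes indep: "indep_vars (\<lambda>_. borel) X I" and "i \<in> I" "J \<subseteq> I" "i \<notin> J"
    and G: "G \<in> borel_measurable (PiM J (\<lambda>_. borel))"
    and "integrable M (X i)" "integrable M (\<lambda>\<omega>. G (restrict (\<lambda>k. X k \<omega>) J))"
  shows "expectation (\<lambda>\<omega>. X i \<omega> * G (restrict (\<lambda>k. X k \<omega>) J))
           = expectation (X i) * expectation (\<lambda>\<omega>. G (restrict (\<lambda>k. X k \<omega>) J))"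
proof -
  have "indep_var (PiM {i} (\<lambda>_. borel)) (\<lambda>\<omega>. restrict (\<lambda>k. X k \<omega>) {i})
                  (PiM J (\<lambda>_. borel)) (\<lambda>\<omega>. restrict (\<lambda>k. X k \<omega>) J)"
    using assms by (intro indep_var_restrict[OF indep]) auto
  from indep_var_compose[OF this, of "\<lambda>f. f i" borel G borel]
  have "indep_var borel (X i) borel (\<lambda>\<omega>. G (restrict (\<lambda>k. X k \<omega>) J))"
    using G by (simp add: comp_def measurable_component_singleton)
  then show ?thesis using assms indep_var_lebesgue_integral by blast
qed

locale unit_interval_indep_vars = prob_space +
  fixes X :: "nat \<Rightarrow> 'a \<Rightarrow> real" and I :: "nat set" and lam :: real
  assumes finite_I: "finite I"
    and indep: "indep_vars (\<lambda>_. borel) X I"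
    and X_nonneg: "\<And>i \<omega>. i \<in> I \<Longrightarrow> \<omega> \<in> space M \<Longrightarrow> 0 \<le> X i \<omega>"
    and X_le_1: "\<And>i \<omega>. i \<in> I \<Longrightarrow> \<omega> \<in> space M \<Longrightarrow> X i \<omega> \<le> 1"
    and lam_nonneg: "0 \<le> lam"
begin

definition psum :: "nat set \<Rightarrow> 'a \<Rightarrow> real" where
  "psum J \<omega> = (\<Sum>k\<in>J. X k \<omega>)"

definition expsq :: "nat set \<Rightarrow> 'a \<Rightarrow> real" where
  "expsq J \<omega> = exp (lam * (psum J \<omega>)\<^sup>2)"

lemma X_measurable: "i \<in> I \<Longrightarrow> X i \<in> borel_measurable M"
  using indep unfolding indep_vars_def by auto

lemma expsq_measurable: "J \<subseteq> I \<Longrightarrow> expsq J \<in> borel_measurable M"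
  unfolding expsq_def psum_def using X_measurable by (measurable, auto)

lemma psum_nonneg: "J \<subseteq> I \<Longrightarrow> \<omega> \<in> space M \<Longrightarrow> 0 \<le> psum J \<omega>"
  unfolding psum_def using X_nonneg by (intro sum_nonneg) auto

lemma psum_le_card: "J \<subseteq> I \<Longrightarrow> \<omega> \<in> space M \<Longrightarrow> psum J \<omega> \<le> card J"
  unfolding psum_def using X_le_1 sum_mono[of J "\<lambda>k. X k \<omega>" "\<lambda>_. 1"] by auto

lemma psum_mono: "J \<subseteq> K \<Longrightarrow> K \<subseteq> I \<Longrightarrow> \<omega> \<in> space M \<Longrightarrow> psum J \<omega> \<le> psum K \<omega>"
  unfolding psum_def using X_nonneg finite_subset[OF _ finite_I] by (intro sum_mono2) auto

lemma expsq_ge_1: "1 \<le> expsq J \<omega>"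
  unfolding expsq_def using lam_nonneg by simp

lemma expsq_le:
  assumes "J \<subseteq> I" "\<omega> \<in> space M"
  shows "expsq J \<omega> \<le> exp (lam * real (card I) ^ 2)"
proof -
  have "psum J \<omega> \<le> card I"
    using psum_le_card[OF assms] card_mono[OF finite_I assms(1)] by linarith
  then have "(psum J \<omega>)\<^sup>2 \<le> (real (card I))\<^sup>2"
    using psum_nonneg[OF assms] by (intro power_mono)
  then show ?thesis
    unfolding expsq_def using lam_nonneg by (simp add: mult_left_mono)
qed

lemma bounded_mult_expsq_integrable:
  assumes "f \<in> borel_measurable M" "\<And>\<omega>. \<omega> \<in> space M \<Longrightarrow> \<bar>f \<omega>\<bar> \<le> 1" "J \<subseteq> I"
  shows "integrable M (\<lambda>\<omega>. f \<omega> * expsq J \<omega>)"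
proof (rule integrable_const_bound[where B = "exp (lam * real (card I) ^ 2)"])
  show "(\<lambda>\<omega>. f \<omega> * expsq J \<omega>) \<in> borel_measurable M"
    using assms expsq_measurable by measurable
  have "\<bar>f \<omega>\<bar> * \<bar>expsq J \<omega>\<bar> \<le> 1 * exp (lam * real (card I) ^ 2)" if "\<omega> \<in> space M" for \<omega>
    using that assms expsq_ge_1[of J \<omega>] expsq_le[of J \<omega>] by (intro mult_mono) auto
  then show "AE \<omega> in M. norm (f \<omega> * expsq J \<omega>) \<le> exp (lam * real (card I) ^ 2)"
    by (simp add: abs_mult)
qed

lemma expsq_integrable: "J \<subseteq> I \<Longrightarrow> integrable M (expsq J)"
  using bounded_mult_expsq_integrable[of "\<lambda>_. 1" J] by simp

lemma X_integrable: "i \<in> I \<Longrightarrow> integrable M (X i)"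
  using X_measurable X_nonneg X_le_1 by (intro integrable_const_bound[where B = 1]) auto

lemma X_mult_expsq_integrable: "i \<in> I \<Longrightarrow> J \<subseteq> I \<Longrightarrow> integrable M (\<lambda>\<omega>. X i \<omega> * expsq J \<omega>)"
  using X_measurable X_nonneg X_le_1 by (intro bounded_mult_expsq_integrable) auto

lemma X_mult_X_mult_expsq_integrable:
  assumes "i \<in> I" "j \<in> I" "J \<subseteq> I"
  shows "integrable M (\<lambda>\<omega>. X i \<omega> * (X j \<omega> * expsq J \<omega>))"
proof -
  have "\<bar>X i \<omega> * X j \<omega>\<bar> \<le> 1" if "\<omega> \<in> space M" for \<omega>
    using assms that X_nonneg X_le_1 by (simp add: abs_mult mult_le_one)
  then have "integrable M (\<lambda>\<omega>. (X i \<omega> * X j \<omega>) * expsq J \<omega>)"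
    using assms X_measurable by (intro bounded_mult_expsq_integrable) auto
  then show ?thesis by (simp add: mult.assoc)
qed

lemma psum_square_mult_expsq_eq:
  "(psum I \<omega>)\<^sup>2 * expsq I \<omega> = (\<Sum>i\<in>I. \<Sum>j\<in>I. X i \<omega> * (X j \<omega> * expsq I \<omega>))"
  by (simp add: psum_def power2_eq_square sum_product sum_distrib_left sum_distrib_right
      mult.assoc mult.left_commute)

lemma psum_square_mult_expsq_integrable:
  "integrable M (\<lambda>\<omega>. (psum I \<omega>)\<^sup>2 * expsq I \<omega>)"
  unfolding psum_square_mult_expsq_eq
  using X_mult_X_mult_expsq_integrable by (intro Bochner_Integration.integrable_sum) auto

lemma expectation_X_nonneg: "i \<in> I \<Longrightarrow> 0 \<le> expectation (X i)"
  using X_nonneg by (intro integral_nonneg_AE) auto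

lemma expectation_expsq_ge_1: "1 \<le> expectation (expsq I)"
  using expsq_integrable expsq_ge_1 by (intro integral_ge_const) auto

lemma expectation_expsq_nonneg: "0 \<le> expectation (expsq J)"
  by (intro integral_nonneg_AE) (simp add: expsq_def)

lemma expectation_expsq_mono:
  assumes "J \<subseteq> I"
  shows "expectation (expsq J) \<le> expectation (expsq I)"
proof (rule integral_mono[OF expsq_integrable[OF assms] expsq_integrable[OF order_refl]])
  fix \<omega> assume "\<omega> \<in> space M"
  then have "(psum J \<omega>)\<^sup>2 \<le> (psum I \<omega>)\<^sup>2"
    using assms psum_nonneg psum_mono by (intro power_mono) auto
  then show "expsq J \<omega> \<le> expsq I \<omega>"
    unfolding expsq_def using lam_nonneg by (simp add: mult_left_mono)
qed

lemma expectation_X_mult_expsq: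
  assumes "i \<in> I" "J \<subseteq> I" "i \<notin> J"
  shows "expectation (\<lambda>\<omega>. X i \<omega> * expsq J \<omega>) = expectation (X i) * expectation (expsq J)"
proof -
  define G :: "(nat \<Rightarrow> real) \<Rightarrow> real" where "G f = exp (lam * (\<Sum>k\<in>J. f k)\<^sup>2)" for f
  have expsq_eq: "expsq J = (\<lambda>\<omega>. G (restrict (\<lambda>k. X k \<omega>) J))"
    by (auto simp: fun_eq_iff expsq_def psum_def G_def intro!: sum.cong)
  have "G \<in> borel_measurable (PiM J (\<lambda>_. borel))"
    unfolding G_def by measurable
  moreover have "integrable M (\<lambda>\<omega>. G (restrict (\<lambda>k. X k \<omega>) J))"
    using expsq_integrable[OF assms(2)] by (simp add: expsq_eq)
  ultimately show ?thesis
    using indep_vars_integral_mult_restrict[OF indep assms] X_integrable[OF assms(1)]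
    by (simp add: expsq_eq)
qed

lemma expectation_X_mult_X_mult_expsq:
  assumes "i \<in> I" "j \<in> I" "i \<noteq> j" "J \<subseteq> I" "i \<notin> J" "j \<notin> J"
  shows "expectation (\<lambda>\<omega>. X i \<omega> * (X j \<omega> * expsq J \<omega>))
           = expectation (X i) * (expectation (X j) * expectation (expsq J))"
proof -
  define G :: "(nat \<Rightarrow> real) \<Rightarrow> real" where "G f = f j * exp (lam * (\<Sum>k\<in>J. f k)\<^sup>2)" for f
  have eq: "X j \<omega> * expsq J \<omega> = G (restrict (\<lambda>k. X k \<omega>) (insert j J))" for \<omega>
    using assms by (auto simp: expsq_def psum_def G_def intro!: sum.cong)
  have "G \<in> borel_measurable (PiM (insert j J) (\<lambda>_. borel))"
    unfolding G_def by measurable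
  moreover have "integrable M (\<lambda>\<omega>. X j \<omega> * expsq J \<omega>)"
    using assms by (intro X_mult_expsq_integrable)
  ultimately have "expectation (\<lambda>\<omega>. X i \<omega> * (X j \<omega> * expsq J \<omega>))
                     = expectation (X i) * expectation (\<lambda>\<omega>. X j \<omega> * expsq J \<omega>)"
    using indep_vars_integral_mult_restrict[OF indep, of i "insert j J" G] X_integrable assms
    by (simp add: eq)
  then show ?thesis
    using expectation_X_mult_expsq[of j J] assms by simp
qed

lemma psum_diff: "K \<subseteq> I \<Longrightarrow> psum I \<omega> = psum (I - K) \<omega> + psum K \<omega>"
  unfolding psum_def using finite_I by (simp add: sum.subset_diff)

lemma expsq_le_mult_expsq_diff:
  fixes c :: real
  assumes "K \<subseteq> I" "\<omega> \<in> space M" "0 < c"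
    and "lam * (real (card K) * (2 * real (card (I - K)) + real (card K))) \<le> ln c"
  shows "expsq I \<omega> \<le> c * expsq (I - K) \<omega>"
  unfolding expsq_def psum_diff[OF assms(1)]
  using assms lam_nonneg psum_nonneg psum_le_card by (intro exp_mult_square_add_le) auto

context
  fixes \<nu> c :: real
  assumes expectation_X_le: "\<And>i. i \<in> I \<Longrightarrow> expectation (X i) \<le> \<nu>"
    and c_pos: "0 < c"
    and lam_le: "lam * (4 * real (card I) - 3) \<le> ln c"
begin

lemma expsq_le_remove:
  assumes "K \<subseteq> I" "K \<noteq> {}" "card K \<le> 2" "\<omega> \<in> space M"
  shows "expsq I \<omega> \<le> c * expsq (I - K) \<omega>"
proof (rule expsq_le_mult_expsq_diff[OF assms(1,4) c_pos])
  have fin: "finite K" using assms(1) finite_I finite_subset by blast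
  then have "card K \<noteq> 0" "card K \<le> card I"
    using assms(1,2) card_mono[OF finite_I] by auto
  moreover have "card (I - K) = card I - card K"
    using assms(1) fin by (simp add: card_Diff_subset)
  moreover have "card K = 1 \<or> card K = 2" using assms(3) \<open>card K \<noteq> 0\<close> by linarith
  ultimately have "real (card K) * (2 * real (card (I - K)) + real (card K)) \<le> 4 * real (card I) - 3"
    by (elim disjE) (auto simp: of_nat_diff)
  then show "lam * (real (card K) * (2 * real (card (I - K)) + real (card K))) \<le> ln c"
    using lam_nonneg lam_le by (meson mult_left_mono order_trans)
qed

lemma expectation_X_square_mult_expsq_le:
  assumes "i \<in> I"
  shows "expectation (\<lambda>\<omega>. X i \<omega> * (X i \<omega> * expsq I \<omega>)) \<le> c * \<nu> * expectation (expsq I)"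
proof -
  have pointwise: "X i \<omega> * (X i \<omega> * expsq I \<omega>) \<le> c * (X i \<omega> * expsq (I - {i}) \<omega>)"
    if "\<omega> \<in> space M" for \<omega>
  proof -
    have "X i \<omega> * (X i \<omega> * expsq I \<omega>) \<le> X i \<omega> * expsq I \<omega>"
      using assms that X_nonneg X_le_1 expsq_ge_1[of I \<omega>] by (intro mult_left_le_one_le) auto
    also have "\<dots> \<le> X i \<omega> * (c * expsq (I - {i}) \<omega>)"
      using assms that X_nonneg expsq_le_remove[of "{i}" \<omega>] by (intro mult_left_mono) auto
    finally show ?thesis by (simp add: algebra_simps)
  qed
  have "expectation (\<lambda>\<omega>. X i \<omega> * (X i \<omega> * expsq I \<omega>))
          \<le> expectation (\<lambda>\<omega>. c * (X i \<omega> * expsq (I - {i}) \<omega>))"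
    using assms pointwise X_mult_X_mult_expsq_integrable X_mult_expsq_integrable
    by (intro integral_mono) auto
  also have "\<dots> = c * (expectation (X i) * expectation (expsq (I - {i})))"
    using assms expectation_X_mult_expsq[of i "I - {i}"] by simp
  also have "\<dots> \<le> c * (\<nu> * expectation (expsq I))"
    using assms c_pos expectation_X_nonneg expectation_X_le expectation_expsq_mono[of "I - {i}"]
      expectation_expsq_nonneg order_trans[OF expectation_X_nonneg expectation_X_le]
    by (intro mult_left_mono mult_mono) auto
  finally show ?thesis by (simp add: mult.assoc)
qed

lemma expectation_X_mult_X_mult_expsq_le:
  assumes "i \<in> I" "j \<in> I" "i \<noteq> j"
  shows "expectation (\<lambda>\<omega>. X i \<omega> * (X j \<omega> * expsq I \<omega>)) \<le> c * \<nu>\<^sup>2 * expectation (expsq I)"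
proof -
  have pointwise: "X i \<omega> * (X j \<omega> * expsq I \<omega>) \<le> c * (X i \<omega> * (X j \<omega> * expsq (I - {i, j}) \<omega>))"
    if "\<omega> \<in> space M" for \<omega>
  proof -
    have "X i \<omega> * X j \<omega> * expsq I \<omega> \<le> X i \<omega> * X j \<omega> * (c * expsq (I - {i, j}) \<omega>)"
      using assms that X_nonneg expsq_le_remove[of "{i, j}" \<omega>] by (intro mult_left_mono) auto
    then show ?thesis by (simp add: algebra_simps)
  qed
  have "expectation (\<lambda>\<omega>. X i \<omega> * (X j \<omega> * expsq I \<omega>))
          \<le> expectation (\<lambda>\<omega>. c * (X i \<omega> * (X j \<omega> * expsq (I - {i, j}) \<omega>)))"
    using assms pointwise X_mult_X_mult_expsq_integrable by (intro integral_mono) auto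
  also have "\<dots> = c * (expectation (X i) * (expectation (X j) * expectation (expsq (I - {i, j}))))"
    using assms expectation_X_mult_X_mult_expsq[of i j "I - {i, j}"] by simp
  also have "\<dots> \<le> c * (\<nu> * (\<nu> * expectation (expsq I)))"
    using assms c_pos expectation_X_nonneg expectation_X_le expectation_expsq_mono[of "I - {i, j}"]
      expectation_expsq_nonneg order_trans[OF expectation_X_nonneg expectation_X_le]
    by (intro mult_left_mono mult_mono) (auto intro: mult_nonneg_nonneg)
  finally show ?thesis by (simp add: power2_eq_square mult.assoc)
qed

lemma expectation_psum_square_mult_expsq_le:
  "expectation (\<lambda>\<omega>. (psum I \<omega>)\<^sup>2 * expsq I \<omega>)
     \<le> c * (real (card I) * \<nu> + (real (card I))\<^sup>2 * \<nu>\<^sup>2) * expectation (expsq I)"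
proof -
  define \<Phi> where "\<Phi> = expectation (expsq I)"
  have "expectation (\<lambda>\<omega>. (psum I \<omega>)\<^sup>2 * expsq I \<omega>)
          = (\<Sum>i\<in>I. \<Sum>j\<in>I. expectation (\<lambda>\<omega>. X i \<omega> * (X j \<omega> * expsq I \<omega>)))"
    unfolding psum_square_mult_expsq_eq
    by (simp add: Bochner_Integration.integral_sum Bochner_Integration.integrable_sum
        X_mult_X_mult_expsq_integrable)
  also have "\<dots> \<le> (\<Sum>i\<in>I. \<Sum>j\<in>I. (if i = j then c * \<nu> * \<Phi> else 0) + c * \<nu>\<^sup>2 * \<Phi>)"
  proof (intro sum_mono)
    fix i j assume "i \<in> I" "j \<in> I"
    moreover have "0 \<le> c * \<nu>\<^sup>2 * \<Phi>"
      using c_pos expectation_expsq_ge_1 by (simp add: \<Phi>_def)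
    ultimately show "expectation (\<lambda>\<omega>. X i \<omega> * (X j \<omega> * expsq I \<omega>))
                       \<le> (if i = j then c * \<nu> * \<Phi> else 0) + c * \<nu>\<^sup>2 * \<Phi>"
      using expectation_X_square_mult_expsq_le expectation_X_mult_X_mult_expsq_le
      by (cases "i = j") (fastforce simp: \<Phi>_def)+
  qed
  also have "\<dots> = c * (real (card I) * \<nu> + (real (card I))\<^sup>2 * \<nu>\<^sup>2) * \<Phi>"
    using finite_I by (simp add: sum.distrib power2_eq_square algebra_simps)
  finally show ?thesis by (simp add: \<Phi>_def)
qed

lemma expectation_expsq_le:
  assumes "1 \<le> c"
  shows "expectation (expsq I) \<le> exp (lam * c * real (card I) * \<nu> * (1 + c * real (card I) * \<nu>))"
proof -
  define \<Phi> where "\<Phi> = expectation (expsq I)"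
  have "ln \<Phi> * \<Phi> \<le> expectation (\<lambda>\<omega>. lam * (psum I \<omega>)\<^sup>2 * expsq I \<omega>)"
    using ln_expectation_exp_mult_le[of "\<lambda>\<omega>. lam * (psum I \<omega>)\<^sup>2"]
      expsq_integrable psum_square_mult_expsq_integrable
    by (simp add: \<Phi>_def expsq_def[abs_def] mult.assoc)
  also have "\<dots> = lam * expectation (\<lambda>\<omega>. (psum I \<omega>)\<^sup>2 * expsq I \<omega>)"
    by (simp add: mult.assoc)
  also have "\<dots> \<le> lam * (c * (real (card I) * \<nu> + (real (card I))\<^sup>2 * \<nu>\<^sup>2) * \<Phi>)"
    unfolding \<Phi>_def using expectation_psum_square_mult_expsq_le lam_nonneg
    by (rule mult_left_mono)
  finally have "ln \<Phi> * \<Phi> \<le> (lam * c * (real (card I) * \<nu> + (real (card I))\<^sup>2 * \<nu>\<^sup>2)) * \<Phi>"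
    by (simp add: mult.assoc)
  then have "ln \<Phi> \<le> lam * c * (real (card I) * \<nu> + (real (card I))\<^sup>2 * \<nu>\<^sup>2)"
    by (rule mult_right_le_imp_le) (use expectation_expsq_ge_1 in \<open>simp add: \<Phi>_def\<close>)
  also have "\<dots> \<le> lam * c * real (card I) * \<nu> * (1 + c * real (card I) * \<nu>)"
  proof -
    have "1 * ((real (card I))\<^sup>2 * \<nu>\<^sup>2) \<le> c * ((real (card I))\<^sup>2 * \<nu>\<^sup>2)"
      using assms by (intro mult_right_mono) auto
    then have "lam * c * (real (card I) * \<nu> + (real (card I))\<^sup>2 * \<nu>\<^sup>2)
                 \<le> lam * c * (real (card I) * \<nu> + c * ((real (card I))\<^sup>2 * \<nu>\<^sup>2))"
      using lam_nonneg c_pos by (intro mult_left_mono add_left_mono) auto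
    then show ?thesis by (simp add: power2_eq_square algebra_simps)
  qed
  finally have "exp (ln \<Phi>) \<le> exp (lam * c * real (card I) * \<nu> * (1 + c * real (card I) * \<nu>))"
    by simp
  then show ?thesis
    using expectation_expsq_ge_1 by (simp add: \<Phi>_def)
qed

end

end

theorem lemma1:
  fixes M :: "'a measure" and X :: "nat \<Rightarrow> 'a \<Rightarrow> real"
    and n :: nat and \<nu> c lam :: real
  assumes "prob_space M"
    and "prob_space.indep_vars M (\<lambda>_. borel) X {1..n}"
    and "\<And>i \<omega>. i \<in> {1..n} \<Longrightarrow> \<omega> \<in> space M \<Longrightarrow> X i \<omega> \<in> {0..1}"
    and "\<And>i. i \<in> {1..n} \<Longrightarrow> prob_space.expectation M (X i) \<le> \<nu>"
    and "\<nu> \<in> {0..1}"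
    and "c \<ge> 1"
    and "lam \<in> {0 .. ln c / (4 * real n - 3)}"
  shows "prob_space.expectation M (\<lambda>\<omega>. exp (lam * (\<Sum>i=1..n. X i \<omega>)\<^sup>2))
           \<le> exp (lam * c * real n * \<nu> * (1 + c * real n * \<nu>))"
proof -
  interpret prob_space M by (fact assms(1))
  interpret unit_interval_indep_vars M X "{1..n}" lam
    by unfold_locales (use assms(2,3,7) in auto)
  \<comment> \<open>For \<open>n = 0\<close> the denominator \<open>4n - 3\<close> is negative, forcing \<open>lam = 0\<close>.\<close>
  have "lam * (4 * real n - 3) \<le> ln c"
  proof (cases "n = 0")
    case True
    have "0 \<le> ln c" using assms(6) by simp
    then show ?thesis using True assms(7) by simp
  next
    case False
    then show ?thesis using assms(7) by (simp add: field_simps)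
  qed
  moreover have "(\<lambda>\<omega>. exp (lam * (\<Sum>i=1..n. X i \<omega>)\<^sup>2)) = expsq {1..n}"
    by (simp add: fun_eq_iff expsq_def psum_def)
  ultimately show ?thesis
    using expectation_expsq_le[of \<nu> c] assms(4,6) by simp
qed

end
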